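(* For every integer $n\ge 0$, $$\ell_n=(-1)^{n-1}\int_1^{+\infty}\frac{\{x\}}{x^2}L_n(\log x)\,\mathrm{d}x .$$
   Context: $\{x\}=x-\lfloor x\rfloor$ is the fractional part. $L_n(u)=\sum_{k=0}^n\binom{n}{k}\frac{(-1)^k}{k!}u^k$ are the Laguerre polynomials. The Stieltjes constants are $\gamma_n=\lim_{N\to\infty}\left(\sum_{k=1}^N\frac{\log^n k}{k}-\frac{\log^{n+1}N}{n+1}\right)$. The coefficients $\ell_n$ are defined by $\ell_0=\gamma_0-1$ and $\ell_n=\sum_{k=1}^n\binom{n-1}{k-1}\frac{(-1)^{n-k}}{k!}\gamma_k$ for $n\ge1$. *)

theory Defs
  imports "HOL-Analysis.Analysis"
begin

definition frac_part :: "real \<Rightarrow> real" where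
  "frac_part x = x - of_int \<lfloor>x\<rfloor>"

definition laguerre :: "nat \<Rightarrow> real \<Rightarrow> real" where
  "laguerre n u = (\<Sum>k=0..n. real (n choose k) * (-1) ^ k / fact k * u ^ k)"

definition stieltjes :: "nat \<Rightarrow> real" where
  "stieltjes n = lim (\<lambda>N. (\<Sum>k=1..N. ln (real k) ^ n / real k) - ln (real N) ^ (n + 1) / real (n + 1))"

definition ell :: "nat \<Rightarrow> real" where
  "ell n = (if n = 0 then stieltjes 0 - 1
            else (\<Sum>k=1..n. real ((n - 1) choose (k - 1)) * (-1) ^ (n - k) / fact k * stieltjes k))"

end

theory Submission
  imports Defs
begin

text \<open>
  Summation by parts on each interval [N, N+1] writes the partial sums defining gamma_m as
  [m = 0] + int_1^N {x} (log^m x / x)' dx. The integrand is O(x^(-3/2)), so dominated convergence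
  gives gamma_m = [m = 0] + int_1^oo {x} (log^m x / x)' dx. By linearity, ell_n is then the integral
  of {x}/x^2 times sum_k binom(n-1, k-1) (-1)^(n-k) / k! (k u^(k-1) - u^k) at u = log x, and this
  polynomial is (-1)^(n-1) L_n(u) by the Pascal recursion
  L_(m+1)(u) = L_m(u) - sum_j binom(m, j) (-1)^j u^(j+1) / (j+1)!.
\<close>

lemma frac_part_nonneg: "0 \<le> frac_part x"
  and frac_part_le_one: "frac_part x \<le> 1"
  unfolding frac_part_def using floor_correct[of x] by linarith+

lemma ln_power_le_powr_half:
  fixes x :: real
  assumes "x \<ge> 1"
  shows "ln x ^ k \<le> (2 * real k) ^ k * x powr (1/2)"
proof (cases "k = 0")
  case True
  then show ?thesis using ge_one_powr_ge_zero[OF assms, of "1/2"] by simp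
next
  case False
  define y where "y = x powr (1 / (2 * real k))"
  have "y > 0" using assms by (simp add: y_def)
  have "ln x = 2 * real k * ln y"
    using assms False by (simp add: y_def)
  also have "\<dots> \<le> 2 * real k * y"
    using ln_le_minus_one[OF \<open>y > 0\<close>] by (intro mult_left_mono) auto
  finally have "ln x ^ k \<le> (2 * real k * y) ^ k"
    using assms by (intro power_mono) auto
  also have "\<dots> = (2 * real k) ^ k * x powr (1/2)"
    using assms False by (simp add: y_def power_mult_distrib powr_power)
  finally show ?thesis .
qed

lemma integrable_on_atLeast_dominated:
  fixes f :: "real \<Rightarrow> 'a::euclidean_space"
  assumes f: "\<And>b. f integrable_on {a..b}"
    and h: "h integrable_on {a..}"
    and le: "\<And>x. x \<ge> a \<Longrightarrow> norm (f x) \<le> h x"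
  shows "f integrable_on {a..}"
    and "(\<lambda>k. integral {a..real k} f) \<longlonglongrightarrow> integral {a..} f"
proof -
  define f' where "f' = (\<lambda>k x. if x \<in> {..real k} then f x else 0)"
  have restrict: "{..real k} \<inter> {a..} = {a..real k}" for k
    by auto
  have "f' k integrable_on {a..}" for k
    unfolding f'_def integrable_restrict_Int restrict using f .
  moreover have "norm (f' k x) \<le> h x" if "x \<in> {a..}" for k x
    using that le[of x] by (auto simp: f'_def intro: order_trans[OF norm_ge_zero])
  moreover have "(\<lambda>k. f' k x) \<longlonglongrightarrow> f x" for x
  proof (rule tendsto_eventually)
    obtain n where "x \<le> real n" using real_arch_simple by blast
    then show "\<forall>\<^sub>F k in sequentially. f' k x = f x"
      unfolding eventually_sequentially by (intro exI[of _ n]) (auto simp: f'_def)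
  qed
  ultimately have "f integrable_on {a..}" "(\<lambda>k. integral {a..} (f' k)) \<longlonglongrightarrow> integral {a..} f"
    using dominated_convergence[OF _ h] by blast+
  then show "f integrable_on {a..}" "(\<lambda>k. integral {a..real k} f) \<longlonglongrightarrow> integral {a..} f"
    unfolding f'_def integral_restrict_Int restrict by simp_all
qed

text \<open>The second factor is the derivative of \<open>ln x ^ m / x\<close>.\<close>
definition stieltjes_integrand :: "nat \<Rightarrow> real \<Rightarrow> real" where
  "stieltjes_integrand m x = frac_part x * ((real m * ln x ^ (m - 1) - ln x ^ m) / x\<^sup>2)"

lemma stieltjes_integrand_has_integral_unit_interval:
  fixes m N :: nat
  assumes "N \<ge> 1"
  shows "(stieltjes_integrand m has_integral
           ln (real (Suc N)) ^ m / real (Suc N)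
           - (ln (real (Suc N)) ^ (m + 1) - ln (real N) ^ (m + 1)) / real (m + 1))
         {real N..real (Suc N)}"
proof -
  txt \<open>On [N, N+1) we have {x} = x - N, and (x - N) f' = ((x - N) f)' - f
    where f x = ln x ^ m / x is the derivative of ln x ^ (m + 1) / (m + 1).\<close>
  define G where
    "G = (\<lambda>x. (x - real N) * (ln x ^ m / x) - ln x ^ (m + 1) / real (m + 1))"
  define g where
    "g = (\<lambda>x. (x - real N) * ((real m * ln x ^ (m - 1) - ln x ^ m) / x\<^sup>2))"
  have "(g has_integral (G (real (Suc N)) - G (real N))) {real N..real (Suc N)}"
  proof (rule fundamental_theorem_of_calculus)
    fix x assume "x \<in> {real N..real (Suc N)}"
    then have "x > 0" using assms by auto
    then have "(G has_real_derivative g x) (at x)"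
      unfolding G_def g_def
      by (intro derivative_eq_intros refl) (auto simp: power2_eq_square mult_ac)
    then show "(G has_vector_derivative g x) (at x within {real N..real (Suc N)})"
      by (simp add: has_real_derivative_iff_has_vector_derivative has_vector_derivative_at_within)
  qed simp
  then have "(stieltjes_integrand m has_integral (G (real (Suc N)) - G (real N))) {real N..real (Suc N)}"
  proof (rule has_integral_spike_finite[of "{real (Suc N)}", rotated 2])
    fix x assume "x \<in> {real N..real (Suc N)} - {real (Suc N)}"
    then have "\<lfloor>x\<rfloor> = int N" by (simp add: floor_eq_iff)
    then show "stieltjes_integrand m x = g x"
      by (simp add: g_def stieltjes_integrand_def frac_part_def)
  qed simp
  moreover have "G (real (Suc N)) - G (real N)
      = ln (real (Suc N)) ^ m / real (Suc N)
        - (ln (real (Suc N)) ^ (m + 1) - ln (real N) ^ (m + 1)) / real (m + 1)"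
    by (simp add: G_def diff_divide_distrib)
  ultimately show ?thesis by simp
qed

lemma stieltjes_integrand_has_integral_partial:
  fixes m N :: nat
  assumes "N \<ge> 1"
  shows "(stieltjes_integrand m has_integral
           (\<Sum>k=1..N. ln (real k) ^ m / real k) - ln (real N) ^ (m + 1) / real (m + 1)
           - of_bool (m = 0)) {1..real N}"
  using assms
proof (induction N rule: nat_induct_at_least)
  case base
  show ?case using has_integral_refl(2)[of "stieltjes_integrand m" 1] by (cases m) simp_all
next
  case (Suc N)
  have "(stieltjes_integrand m has_integral
         (\<Sum>k=1..N. ln (real k) ^ m / real k) - ln (real N) ^ (m + 1) / real (m + 1) - of_bool (m = 0)
         + (ln (real (Suc N)) ^ m / real (Suc N)
            - (ln (real (Suc N)) ^ (m + 1) - ln (real N) ^ (m + 1)) / real (m + 1)))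
        {1..real (Suc N)}"
    using Suc by (intro has_integral_combine[OF _ _ Suc.IH
        stieltjes_integrand_has_integral_unit_interval]) auto
  moreover have "(\<Sum>k=1..N. ln (real k) ^ m / real k) - ln (real N) ^ (m + 1) / real (m + 1) - of_bool (m = 0)
         + (ln (real (Suc N)) ^ m / real (Suc N)
            - (ln (real (Suc N)) ^ (m + 1) - ln (real N) ^ (m + 1)) / real (m + 1))
      = (\<Sum>k=1..Suc N. ln (real k) ^ m / real k) - ln (real (Suc N)) ^ (m + 1) / real (m + 1)
         - of_bool (m = 0)"
    using Suc.hyps by (simp only: sum.cl_ivl_Suc) (simp add: diff_divide_distrib)
  ultimately show ?case by (simp only:)
qed

lemma stieltjes_integrand_bound:
  obtains C where "\<And>x. x \<ge> 1 \<Longrightarrow> \<bar>stieltjes_integrand m x\<bar> \<le> C * x powr (-3/2)"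
proof
  define C where "C = real m * (2 * real (m - 1)) ^ (m - 1) + (2 * real m) ^ m"
  fix x :: real
  assume x: "x \<ge> 1"
  have "\<bar>real m * ln x ^ (m - 1) - ln x ^ m\<bar> \<le> real m * ln x ^ (m - 1) + ln x ^ m"
    using x by (simp add: abs_le_iff)
  also have "\<dots> \<le> real m * ((2 * real (m - 1)) ^ (m - 1) * x powr (1/2))
                   + (2 * real m) ^ m * x powr (1/2)"
    by (intro add_mono mult_left_mono ln_power_le_powr_half x) auto
  also have "\<dots> = C * x powr (1/2)"
    by (simp add: C_def algebra_simps)
  finally have "\<bar>frac_part x\<bar> * \<bar>real m * ln x ^ (m - 1) - ln x ^ m\<bar> \<le> 1 * (C * x powr (1/2))"
    using frac_part_nonneg[of x] frac_part_le_one[of x] by (intro mult_mono) auto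
  then have "\<bar>stieltjes_integrand m x\<bar> \<le> C * (x powr (1/2) / x powr 2)"
    using x by (simp add: stieltjes_integrand_def abs_mult divide_right_mono)
  also have "x powr (1/2) / x powr 2 = x powr (-3/2)"
    by (simp flip: powr_diff)
  finally show "\<bar>stieltjes_integrand m x\<bar> \<le> C * x powr (-3/2)" .
qed

lemma stieltjes_integrand_integrable:
  "stieltjes_integrand m integrable_on {1..}"
  and stieltjes_eq_integral:
  "stieltjes m = of_bool (m = 0) + integral {1..} (stieltjes_integrand m)"
proof -
  obtain C where C: "\<And>x. x \<ge> 1 \<Longrightarrow> norm (stieltjes_integrand m x) \<le> C * x powr (-3/2)"
    using stieltjes_integrand_bound by (metis real_norm_def)
  have partial: "stieltjes_integrand m integrable_on {1..b}" for b
  proof (rule integrable_on_subinterval)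
    show "stieltjes_integrand m integrable_on {1..real (Suc (nat \<lceil>b\<rceil>))}"
      by (rule has_integral_integrable[OF stieltjes_integrand_has_integral_partial]) simp
    show "{1..b} \<subseteq> {1..real (Suc (nat \<lceil>b\<rceil>))}"
      by auto linarith
  qed
  have majorant: "(\<lambda>x. C * x powr (-3/2)) integrable_on {1..}"
    by (intro integrable_on_mult_right has_integral_integrable[OF has_integral_powr_to_inf]) auto
  note tail = integrable_on_atLeast_dominated[OF partial majorant C]
  show "stieltjes_integrand m integrable_on {1..}"
    using tail by blast
  define S where
    "S = (\<lambda>N::nat. (\<Sum>k=1..N. ln (real k) ^ m / real k) - ln (real N) ^ (m + 1) / real (m + 1))"
  have "(\<lambda>N. of_bool (m = 0) + integral {1..real N} (stieltjes_integrand m))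
          \<longlonglongrightarrow> of_bool (m = 0) + integral {1..} (stieltjes_integrand m)"
    using tail by (intro tendsto_add tendsto_const)
  moreover have "\<forall>\<^sub>F N in sequentially.
      of_bool (m = 0) + integral {1..real N} (stieltjes_integrand m) = S N"
    unfolding eventually_sequentially
    by (intro exI[of _ 1] allI impI)
      (simp add: S_def integral_unique[OF stieltjes_integrand_has_integral_partial])
  ultimately have "S \<longlonglongrightarrow> of_bool (m = 0) + integral {1..} (stieltjes_integrand m)"
    by (rule Lim_transform_eventually)
  then show "stieltjes m = of_bool (m = 0) + integral {1..} (stieltjes_integrand m)"
    unfolding stieltjes_def S_def[symmetric] by (rule limI)
qed

lemma laguerre_Suc:
  "laguerre (Suc m) u = laguerre m u - (\<Sum>j=0..m. real (m choose j) * (-1) ^ j * u ^ Suc j / fact (Suc j))"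
proof -
  define t where "t = (\<lambda>k. (-1) ^ k / fact k * u ^ k :: real)"
  have "laguerre (Suc m) u = 1 + (\<Sum>j=0..m. real (Suc m choose Suc j) * t (Suc j))"
    unfolding laguerre_def t_def by (subst sum.atLeast0_atMost_Suc_shift) (simp add: mult.assoc)
  also have "\<dots> = 1 + (\<Sum>j=0..m. real (m choose Suc j) * t (Suc j))
                    + (\<Sum>j=0..m. real (m choose j) * t (Suc j))"
    by (simp add: sum.distrib algebra_simps)
  also have "1 + (\<Sum>j=0..m. real (m choose Suc j) * t (Suc j)) = laguerre m u"
  proof -
    have "laguerre m u = (\<Sum>k=0..Suc m. real (m choose k) * t k)"
      unfolding laguerre_def t_def by (simp add: mult.assoc)
    also have "\<dots> = 1 + (\<Sum>j=0..m. real (m choose Suc j) * t (Suc j))"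
      by (subst sum.atLeast0_atMost_Suc_shift) (simp add: t_def)
    finally show ?thesis ..
  qed
  also have "(\<Sum>j=0..m. real (m choose j) * t (Suc j))
             = - (\<Sum>j=0..m. real (m choose j) * (-1) ^ j * u ^ Suc j / fact (Suc j))"
    unfolding sum_negf[symmetric] by (intro sum.cong) (simp_all add: t_def)
  finally show ?thesis by simp
qed

lemma laguerre_Suc_eq_derivative_combination:
  "(\<Sum>k=1..Suc m. real (m choose (k - 1)) * (-1) ^ (Suc m - k) / fact k * (real k * u ^ (k - 1) - u ^ k))
   = (-1) ^ m * laguerre (Suc m) u"
proof -
  have "(\<Sum>k=1..Suc m. real (m choose (k - 1)) * (-1) ^ (Suc m - k) / fact k * (real k * u ^ (k - 1) - u ^ k))
      = (\<Sum>j=0..m. real (m choose j) * (-1) ^ (m - j) / fact (Suc j) * (real (Suc j) * u ^ j - u ^ Suc j))"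
    by (simp only: One_nat_def sum.shift_bounds_cl_Suc_ivl) simp
  also have "\<dots> = (-1) ^ m * (\<Sum>j=0..m. real (m choose j) * (-1) ^ j * (u ^ j / fact j - u ^ Suc j / fact (Suc j)))"
    unfolding sum_distrib_left
  proof (rule sum.cong)
    fix j assume "j \<in> {0..m}"
    then have "(-1::real) ^ (m - j) = (-1) ^ m * (-1) ^ j"
      by (simp flip: neg_one_power_add_eq_neg_one_power_diff add: power_add)
    then have "real (m choose j) * (-1) ^ (m - j) / fact (Suc j) * (real (Suc j) * u ^ j - u ^ Suc j)
        = (-1) ^ m * (real (m choose j) * (-1) ^ j
            * (real (Suc j) / fact (Suc j) * u ^ j - u ^ Suc j / fact (Suc j)))"
      by (simp add: algebra_simps diff_divide_distrib del: fact_Suc of_nat_Suc)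
    also have "real (Suc j) / fact (Suc j) = 1 / (fact j :: real)"
      by (simp del: of_nat_Suc)
    finally show "real (m choose j) * (-1) ^ (m - j) / fact (Suc j) * (real (Suc j) * u ^ j - u ^ Suc j)
        = (-1) ^ m * (real (m choose j) * (-1) ^ j * (u ^ j / fact j - u ^ Suc j / fact (Suc j)))"
      by simp
  qed simp
  also have "(\<Sum>j=0..m. real (m choose j) * (-1) ^ j * (u ^ j / fact j - u ^ Suc j / fact (Suc j)))
      = laguerre m u - (\<Sum>j=0..m. real (m choose j) * (-1) ^ j * u ^ Suc j / fact (Suc j))"
    unfolding laguerre_def sum_subtractf[symmetric]
    by (rule sum.cong) (simp_all add: right_diff_distrib del: fact_Suc)
  also have "\<dots> = laguerre (Suc m) u"
    by (rule laguerre_Suc[symmetric])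
  finally show ?thesis .
qed
theorem theorem2p1:
  fixes n :: nat
  shows "(\<lambda>x. frac_part x / x\<^sup>2 * laguerre n (ln x)) integrable_on {1..} \<and>
         ell n = (-1) powi (int n - 1) * integral {1..} (\<lambda>x. frac_part x / x\<^sup>2 * laguerre n (ln x))"
proof (cases n)
  case 0
  then have "(\<lambda>x. frac_part x / x\<^sup>2 * laguerre n (ln x)) = (\<lambda>x. - stieltjes_integrand 0 x)"
    by (simp add: fun_eq_iff laguerre_def stieltjes_integrand_def)
  then show ?thesis
    using 0 stieltjes_integrand_integrable[of 0] stieltjes_eq_integral[of 0]
    by (simp add: ell_def integrable_neg)
next
  case (Suc m)
  define F where "F x = frac_part x / x\<^sup>2 * laguerre n (ln x)" for x
  define c where "c k = real (m choose (k - 1)) * (-1) ^ (Suc m - k) / fact k" for k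
  have combination: "(\<lambda>x. (-1) ^ m * F x) = (\<lambda>x. \<Sum>k=1..Suc m. c k * stieltjes_integrand k x)"
  proof
    fix x
    have "(\<Sum>k=1..Suc m. c k * stieltjes_integrand k x)
        = frac_part x / x\<^sup>2 * (\<Sum>k=1..Suc m. c k * (real k * ln x ^ (k - 1) - ln x ^ k))"
      unfolding sum_distrib_left by (rule sum.cong) (simp_all add: stieltjes_integrand_def)
    then show "(-1) ^ m * F x = (\<Sum>k=1..Suc m. c k * stieltjes_integrand k x)"
      using laguerre_Suc_eq_derivative_combination[of m "ln x"] Suc by (simp add: F_def c_def)
  qed
  have "(\<lambda>x. \<Sum>k=1..Suc m. c k * stieltjes_integrand k x) integrable_on {1..}"
    by (intro integrable_sum integrable_on_mult_right stieltjes_integrand_integrable) simp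
  then have "(\<lambda>x. (-1) ^ m * F x) integrable_on {1..}"
    unfolding combination .
  then have "F integrable_on {1..}"
    by simp
  have "(-1) powi (int n - 1) * integral {1..} F = integral {1..} (\<lambda>x. (-1) ^ m * F x)"
    using Suc \<open>F integrable_on {1..}\<close> by simp
  also have "\<dots> = (\<Sum>k=1..Suc m. c k * integral {1..} (stieltjes_integrand k))"
    unfolding combination
    by (subst integral_sum) (auto intro: integrable_on_mult_right stieltjes_integrand_integrable)
  also have "\<dots> = ell n"
    using Suc by (simp add: ell_def c_def stieltjes_eq_integral)
  finally show ?thesis
    using \<open>F integrable_on {1..}\<close> by (simp only: F_def[abs_def])
qed

end
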